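(* Let $G = \bigcap_{i \in \mathcal{I}} G_i$ be a nonempty domain in $\mathbb{R}^d$, where $\mathcal{I}=\{1,\dots,\mathbf{I}\}$ is a nonempty finite index set and for each $i \in \mathcal{I}$, $G_i$ is a nonempty domain, $G_i \neq \mathbb{R}^d$, whose boundary $\partial G_i$ is $C^1$, and let $n^i(\cdot)$ denote the unit normal vector field on $\partial G_i$ pointing into $G_i$. Let $\gamma^i:\mathbb{R}^d\to\mathbb{R}^d$, $i\in\mathcal{I}$, be vector fields, and for $x\in\mathbb{R}^d$ let $\mathcal{I}(x)=\{i\in\mathcal{I}: x\in\partial G_i\}$. Then there is a constant $a \in (0,1)$ and a vector valued function $b: \partial G \to \mathbb{R}_+^{\mathbf{I}}$ such that for each $x \in \partial G$, $\sum_{i \in \mathcal{I}(x)} b_i(x) = 1$ and for each $i \in \mathcal{I}(x)$, $$b_i(x)\langle n^i(x), \gamma^i(x)\rangle \ge a + \sum_{j \in \mathcal{I}(x)\setminus\{i\}} b_j(x)\,|\langle n^j(x), \gamma^i(x)\rangle|,$$ if and only if there is a constant $a \in (0,1)$ and a vector valued function $c: \partial G \to \mathbb{R}_+^{\mathbf{I}}$ such that for each $x \in \partial G$, $\sum_{i \in \mathcal{I}(x)} c_i(x) = 1$ and for each $i \in \mathcal{I}(x)$, $$c_i(x)\langle \gamma^i(x), n^i(x)\rangle \ge a + \sum_{j \in \mathcal{I}(x)\setminus\{i\}} c_j(x)\,|\langle \gamma^j(x), n^i(x)\rangle|.$$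
   Context: $\langle\cdot,\cdot\rangle$ is the Euclidean inner product on $\mathbb{R}^d$, $\mathbb{R}_+^{\mathbf{I}}$ is the nonnegative orthant, and $\partial G$ is the boundary of $G$. *)

theory Defs
  imports "HOL-Analysis.Analysis"
begin

definition is_domain :: "'a::euclidean_space set \<Rightarrow> bool" where
  "is_domain D \<longleftrightarrow> D \<noteq> {} \<and> open D \<and> connected D"

definition C1_boundary_inward_normal :: "'a::euclidean_space set \<Rightarrow> ('a \<Rightarrow> 'a) \<Rightarrow> bool" where
  "C1_boundary_inward_normal D n \<longleftrightarrow>
     (\<forall>x\<in>frontier D. \<exists>U \<phi> \<phi>'. open U \<and> x \<in> U \<and>
        (\<forall>y\<in>U. (\<phi> has_derivative (\<lambda>h. \<phi>' y \<bullet> h)) (at y)) \<and>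
        continuous_on U \<phi>' \<and> (\<forall>y\<in>U. \<phi>' y \<noteq> 0) \<and>
        D \<inter> U = {y\<in>U. \<phi> y > 0} \<and> frontier D \<inter> U = {y\<in>U. \<phi> y = 0} \<and>
        n x = (1 / norm (\<phi>' x)) *\<^sub>R \<phi>' x)"

definition active_idx :: "nat \<Rightarrow> (nat \<Rightarrow> 'a::topological_space set) \<Rightarrow> 'a \<Rightarrow> nat set" where
  "active_idx I G x = {i\<in>{1..I}. x \<in> frontier (G i)}"

end

theory Submission
  imports Defs
begin

text \<open>At a boundary point x both conditions concern the same Z-matrix M, indexed by I(x),
  with diagonal entries <\<gamma>_i(x), n_i(x)> and off-diagonal entries -|<\<gamma>_j(x), n_i(x)>|:
  the c-condition asks for a probability vector c with M c \<ge> a componentwise, the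
  b-condition for one with b^T M \<ge> a.  A Z-matrix with M c > 0 for some c \<ge> 0 has a
  nonnegative inverse, so y^T M = 1 has a solution y \<ge> 0; Gaussian elimination preserves
  both the sign pattern and the positivity of M c.  Pairing with c gives
  a \<Sum>y \<le> y^T M c = 1, hence b = y / \<Sum>y satisfies b^T M = 1 / \<Sum>y \<ge> a, with the same a.\<close>

definition Z_matrix_on :: "'i set \<Rightarrow> ('i \<Rightarrow> 'i \<Rightarrow> real) \<Rightarrow> bool" where
  "Z_matrix_on J A \<longleftrightarrow> (\<forall>i\<in>J. \<forall>j\<in>J. i \<noteq> j \<longrightarrow> A i j \<le> 0)"

definition schur_complement :: "('i \<Rightarrow> 'i \<Rightarrow> real) \<Rightarrow> 'i \<Rightarrow> 'i \<Rightarrow> 'i \<Rightarrow> real" where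
  "schur_complement A k i j = A i j - A i k * A k j / A k k"

definition weighted_row_bound :: "'i set \<Rightarrow> ('i \<Rightarrow> 'i \<Rightarrow> real) \<Rightarrow> real \<Rightarrow> ('i \<Rightarrow> real) \<Rightarrow> bool" where
  "weighted_row_bound J A a c \<longleftrightarrow> (\<Sum>j\<in>J. c j) = 1 \<and> (\<forall>i\<in>J. a \<le> (\<Sum>j\<in>J. A i j * c j))"

lemma Z_matrix_on_transpose: "Z_matrix_on J (\<lambda>i j. A j i) \<longleftrightarrow> Z_matrix_on J A"
  unfolding Z_matrix_on_def by (intro iffI ballI impI) (simp_all add: eq_commute)

lemma Z_matrix_on_diag_pos:
  assumes Z: "Z_matrix_on J A" and "finite J" "k \<in> J"
    and c: "\<forall>j\<in>J. 0 \<le> c j" and pos: "0 < (\<Sum>j\<in>J. A k j * c j)"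
  shows "0 < A k k"
proof -
  have "(\<Sum>j\<in>J - {k}. A k j * c j) \<le> 0"
    using Z c \<open>k \<in> J\<close> unfolding Z_matrix_on_def by (intro sum_nonpos mult_nonpos_nonneg) auto
  moreover have "(\<Sum>j\<in>J. A k j * c j) = A k k * c k + (\<Sum>j\<in>J - {k}. A k j * c j)"
    using assms(2,3) by (rule sum.remove)
  ultimately have "0 < A k k * c k" using pos by linarith
  with c \<open>k \<in> J\<close> show ?thesis using zero_less_mult_iff[of "A k k" "c k"] by auto
qed

lemma Z_matrix_on_schur_complement:
  assumes "Z_matrix_on (insert k F) A" "k \<notin> F" "0 < A k k"
  shows "Z_matrix_on F (schur_complement A k)"
  unfolding Z_matrix_on_def schur_complement_def
proof (intro ballI impI)
  fix i j assume "i \<in> F" "j \<in> F" "i \<noteq> j"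
  with assms have "A i j \<le> 0" "A i k \<le> 0" "A k j \<le> 0" unfolding Z_matrix_on_def by auto
  with \<open>0 < A k k\<close> have "0 \<le> A i k * A k j / A k k" by (simp add: mult_nonpos_nonpos)
  with \<open>A i j \<le> 0\<close> show "A i j - A i k * A k j / A k k \<le> 0" by linarith
qed

lemma sum_schur_complement:
  assumes "finite F" "k \<notin> F" "A k k \<noteq> 0"
  shows "(\<Sum>j\<in>F. schur_complement A k i j * c j)
    = (\<Sum>j\<in>insert k F. A i j * c j) - A i k / A k k * (\<Sum>j\<in>insert k F. A k j * c j)"
proof -
  have "(\<Sum>j\<in>F. schur_complement A k i j * c j)
      = (\<Sum>j\<in>F. A i j * c j) - A i k / A k k * (\<Sum>j\<in>F. A k j * c j)"
    by (simp add: schur_complement_def left_diff_distrib sum_subtractf sum_distrib_left mult.assoc)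
  with assms show ?thesis by (simp add: field_simps)
qed

lemma schur_complement_semipositive:
  assumes Z: "Z_matrix_on (insert k F) A" and "finite F" "k \<notin> F"
    and c: "\<forall>j\<in>insert k F. 0 \<le> c j"
    and pos: "\<forall>i\<in>insert k F. 0 < (\<Sum>j\<in>insert k F. A i j * c j)"
  shows "\<forall>i\<in>F. 0 < (\<Sum>j\<in>F. schur_complement A k i j * c j)"
proof
  fix i assume "i \<in> F"
  have Akk: "0 < A k k"
    using Z_matrix_on_diag_pos[OF Z _ _ c] pos \<open>finite F\<close> by blast
  have "A i k \<le> 0" using Z \<open>i \<in> F\<close> \<open>k \<notin> F\<close> unfolding Z_matrix_on_def by auto
  hence "A i k / A k k * (\<Sum>j\<in>insert k F. A k j * c j) \<le> 0"
    using Akk pos by (intro mult_nonpos_nonneg divide_nonpos_pos) auto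
  moreover have "0 < (\<Sum>j\<in>insert k F. A i j * c j)" using pos \<open>i \<in> F\<close> by blast
  ultimately show "0 < (\<Sum>j\<in>F. schur_complement A k i j * c j)"
    using sum_schur_complement[OF \<open>finite F\<close> \<open>k \<notin> F\<close>, of A i c] Akk by simp
qed

lemma schur_complement_left_solve_extend:
  assumes "finite F" "k \<notin> F" "A k k \<noteq> 0"
    and y: "\<forall>j\<in>F. (\<Sum>i\<in>F. y i * schur_complement A k i j) = r j - r k * A k j / A k k"
  defines "yk \<equiv> (r k - (\<Sum>i\<in>F. y i * A i k)) / A k k"
  shows "\<forall>j\<in>insert k F. (\<Sum>i\<in>insert k F. (y(k := yk)) i * A i j) = r j"
proof
  have sum_upd: "(\<Sum>i\<in>insert k F. (y(k := yk)) i * A i j) = yk * A k j + (\<Sum>i\<in>F. y i * A i j)"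
    for j using assms(1,2) by simp (auto intro!: sum.cong)
  fix j assume j: "j \<in> insert k F"
  show "(\<Sum>i\<in>insert k F. (y(k := yk)) i * A i j) = r j"
  proof (cases "j = k")
    case True
    have "yk * A k k = r k - (\<Sum>i\<in>F. y i * A i k)" using assms(3) unfolding yk_def by simp
    then show ?thesis using sum_upd[of k] True by simp
  next
    case False
    with j y have "(\<Sum>i\<in>F. y i * schur_complement A k i j) = r j - r k * A k j / A k k" by auto
    moreover have "(\<Sum>i\<in>F. y i * schur_complement A k i j)
        = (\<Sum>i\<in>F. y i * A i j) - A k j / A k k * (\<Sum>i\<in>F. y i * A i k)"
      unfolding schur_complement_def by (simp add: sum_subtractf sum_distrib_left algebra_simps)
    moreover have "yk * A k j = r k * A k j / A k k - A k j / A k k * (\<Sum>i\<in>F. y i * A i k)"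
      unfolding yk_def by (simp add: diff_divide_distrib algebra_simps)
    ultimately show ?thesis using sum_upd[of j] by linarith
  qed
qed

lemma Z_matrix_on_left_solve_nonneg:
  assumes "finite J" "Z_matrix_on J A" "\<forall>j\<in>J. 0 \<le> c j"
    and "\<forall>i\<in>J. 0 < (\<Sum>j\<in>J. A i j * c j)" "\<forall>j\<in>J. 0 \<le> r j"
  shows "\<exists>y. (\<forall>i\<in>J. 0 \<le> y i) \<and> (\<forall>j\<in>J. (\<Sum>i\<in>J. y i * A i j) = r j)"
  using assms
proof (induction J arbitrary: A r rule: finite_induct)
  case empty
  then show ?case by auto
next
  case (insert k F)
  note Z = insert.prems(1) and c = insert.prems(2) and pos = insert.prems(3) and r = insert.prems(4)
  have Akk: "0 < A k k"
    using Z_matrix_on_diag_pos[OF Z _ _ c] pos insert.hyps(1) by blast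
  have r': "\<forall>j\<in>F. 0 \<le> r j - r k * A k j / A k k"
  proof
    fix j assume "j \<in> F"
    with Z insert.hyps(2) have "A k j \<le> 0" unfolding Z_matrix_on_def by auto
    with r Akk have "r k * A k j / A k k \<le> 0"
      by (simp add: mult_nonneg_nonpos divide_nonpos_pos)
    with r \<open>j \<in> F\<close> show "0 \<le> r j - r k * A k j / A k k" by force
  qed
  obtain y where y: "\<forall>i\<in>F. 0 \<le> y i"
    and y_solves: "\<forall>j\<in>F. (\<Sum>i\<in>F. y i * schur_complement A k i j) = r j - r k * A k j / A k k"
    using insert.IH[OF Z_matrix_on_schur_complement[OF Z insert.hyps(2) Akk] _
        schur_complement_semipositive[OF Z insert.hyps(1,2) c pos] r'] c by auto
  define yk where "yk = (r k - (\<Sum>i\<in>F. y i * A i k)) / A k k"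
  have "(\<Sum>i\<in>F. y i * A i k) \<le> 0"
    using Z y insert.hyps(2) unfolding Z_matrix_on_def by (intro sum_nonpos mult_nonneg_nonpos) auto
  with Akk r have "0 \<le> yk" unfolding yk_def by auto
  with y have "\<forall>i\<in>insert k F. 0 \<le> (y(k := yk)) i" by auto
  moreover have "\<forall>j\<in>insert k F. (\<Sum>i\<in>insert k F. (y(k := yk)) i * A i j) = r j"
    unfolding yk_def using schur_complement_left_solve_extend[OF insert.hyps(1,2) _ y_solves] Akk
    by simp
  ultimately show ?case by blast
qed

lemma left_solution_weighted_row_bound:
  assumes y: "\<forall>i\<in>J. 0 \<le> y i" and y_solves: "\<forall>j\<in>J. (\<Sum>i\<in>J. y i * A i j) = 1"
    and c: "weighted_row_bound J A a c"
  shows "a * (\<Sum>i\<in>J. y i) \<le> 1"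
proof -
  from c have c1: "(\<Sum>j\<in>J. c j) = 1" and row: "\<forall>i\<in>J. a \<le> (\<Sum>j\<in>J. A i j * c j)"
    unfolding weighted_row_bound_def by auto
  have "a * (\<Sum>i\<in>J. y i) = (\<Sum>i\<in>J. y i * a)" by (simp add: sum_distrib_left mult.commute)
  also have "\<dots> \<le> (\<Sum>i\<in>J. y i * (\<Sum>j\<in>J. A i j * c j))"
    using y row by (intro sum_mono mult_left_mono) auto
  also have "\<dots> = (\<Sum>i\<in>J. \<Sum>j\<in>J. c j * (y i * A i j))"
    by (simp add: sum_distrib_left mult_ac)
  also have "\<dots> = (\<Sum>j\<in>J. c j * (\<Sum>i\<in>J. y i * A i j))"
    by (subst sum.swap) (simp add: sum_distrib_left)
  also have "\<dots> = 1" using y_solves c1 by simp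
  finally show ?thesis .
qed

lemma Z_matrix_on_weighted_row_bound_transpose:
  assumes fin: "finite J" and Z: "Z_matrix_on J A" and "0 < a"
    and c0: "\<forall>j\<in>J. 0 \<le> c j" and c: "weighted_row_bound J A a c"
  shows "\<exists>b. (\<forall>j\<in>J. 0 \<le> b j) \<and> weighted_row_bound J (\<lambda>i j. A j i) a b"
proof -
  from c have "J \<noteq> {}" and row: "\<forall>i\<in>J. a \<le> (\<Sum>j\<in>J. A i j * c j)"
    unfolding weighted_row_bound_def by auto
  then obtain j0 where "j0 \<in> J" by blast
  have "\<forall>i\<in>J. 0 < (\<Sum>j\<in>J. A i j * c j)" using row \<open>0 < a\<close> by (auto intro: less_le_trans)
  then obtain y where y: "\<forall>i\<in>J. 0 \<le> y i" and y_solves: "\<forall>j\<in>J. (\<Sum>i\<in>J. y i * A i j) = 1"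
    using Z_matrix_on_left_solve_nonneg[OF fin Z c0, of "\<lambda>_. 1"] by auto
  define s where "s = (\<Sum>i\<in>J. y i)"
  have as: "a * s \<le> 1" unfolding s_def by (rule left_solution_weighted_row_bound[OF y y_solves c])
  have "s \<noteq> 0"
  proof
    assume "s = 0"
    with y have "\<forall>i\<in>J. y i = 0" unfolding s_def using sum_nonneg_eq_0_iff[OF fin] by blast
    with y_solves \<open>j0 \<in> J\<close> show False by simp
  qed
  with y have "0 < s" unfolding s_def by (simp add: sum_nonneg order_less_le)
  have "weighted_row_bound J (\<lambda>i j. A j i) a (\<lambda>i. y i / s)"
    unfolding weighted_row_bound_def
  proof (intro conjI ballI)
    show "(\<Sum>i\<in>J. y i / s) = 1"
      using \<open>s \<noteq> 0\<close> unfolding s_def by (simp add: sum_divide_distrib[symmetric])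
  next
    fix j assume "j \<in> J"
    have "(\<Sum>i\<in>J. A i j * (y i / s)) = (\<Sum>i\<in>J. y i * A i j) / s"
      by (simp add: sum_divide_distrib mult.commute)
    also have "\<dots> = 1 / s" using y_solves \<open>j \<in> J\<close> by simp
    finally have "(\<Sum>i\<in>J. A i j * (y i / s)) = 1 / s" .
    moreover have "a \<le> 1 / s" using as \<open>0 < s\<close> by (simp add: field_simps)
    ultimately show "a \<le> (\<Sum>i\<in>J. A i j * (y i / s))" by simp
  qed
  moreover have "\<forall>j\<in>J. 0 \<le> y j / s" using y \<open>0 < s\<close> by simp
  ultimately show ?thesis by (intro exI[of _ "\<lambda>i. y i / s"] conjI)
qed

lemma uniform_weighted_row_bound_transpose:
  assumes J: "\<And>x. x \<in> S \<Longrightarrow> finite (J x) \<and> J x \<subseteq> K \<and> Z_matrix_on (J x) (A x)"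
    and "0 < a" and c: "\<forall>x\<in>S. (\<forall>i\<in>K. 0 \<le> c x i) \<and> weighted_row_bound (J x) (A x) a (c x)"
  shows "\<exists>b. \<forall>x\<in>S. (\<forall>i\<in>K. 0 \<le> b x i) \<and> weighted_row_bound (J x) (\<lambda>i j. A x j i) a (b x)"
proof -
  have "\<exists>b. (\<forall>j\<in>J x. 0 \<le> b j) \<and> weighted_row_bound (J x) (\<lambda>i j. A x j i) a b" if "x \<in> S" for x
  proof (rule Z_matrix_on_weighted_row_bound_transpose[OF _ _ \<open>0 < a\<close>])
    show "finite (J x)" "Z_matrix_on (J x) (A x)" using J[OF that] by auto
    show "\<forall>j\<in>J x. 0 \<le> c x j" "weighted_row_bound (J x) (A x) a (c x)"
      using J[OF that] c that by auto
  qed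
  then obtain b where b: "\<And>x. x \<in> S \<Longrightarrow>
      (\<forall>j\<in>J x. 0 \<le> b x j) \<and> weighted_row_bound (J x) (\<lambda>i j. A x j i) a (b x)"
    by metis
  define b' where "b' x i = (if i \<in> J x then b x i else 0)" for x i
  have "weighted_row_bound (J x) A' a (b' x) \<longleftrightarrow> weighted_row_bound (J x) A' a (b x)" for x A'
    unfolding weighted_row_bound_def b'_def by (simp cong: sum.cong)
  with b have "\<forall>x\<in>S. (\<forall>i\<in>K. 0 \<le> b' x i) \<and> weighted_row_bound (J x) (\<lambda>i j. A x j i) a (b' x)"
    unfolding b'_def by simp
  then show ?thesis by (intro exI[of _ b'])
qed

lemma uniform_weighted_row_bound_transpose_iff:
  assumes J: "\<And>x. x \<in> S \<Longrightarrow> finite (J x) \<and> J x \<subseteq> K \<and> Z_matrix_on (J x) (A x)"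
  shows "(\<exists>a c. 0 < a \<and> a < 1 \<and> (\<forall>x\<in>S. (\<forall>i\<in>K. 0 \<le> c x i) \<and> weighted_row_bound (J x) (A x) a (c x)))
    \<longleftrightarrow> (\<exists>a b. 0 < a \<and> a < 1 \<and>
          (\<forall>x\<in>S. (\<forall>i\<in>K. 0 \<le> b x i) \<and> weighted_row_bound (J x) (\<lambda>i j. A x j i) a (b x)))"
proof -
  have J': "finite (J x) \<and> J x \<subseteq> K \<and> Z_matrix_on (J x) (\<lambda>i j. A x j i)" if "x \<in> S" for x
    using J[OF that] Z_matrix_on_transpose[of "J x" "A x"] by blast
  show ?thesis
  proof (intro iffI; elim exE conjE)
    fix a c assume a: "0 < a" "a < 1"
      and c: "\<forall>x\<in>S. (\<forall>i\<in>K. 0 \<le> c x i) \<and> weighted_row_bound (J x) (A x) a (c x)"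
    obtain b where "\<forall>x\<in>S. (\<forall>i\<in>K. 0 \<le> b x i) \<and> weighted_row_bound (J x) (\<lambda>i j. A x j i) a (b x)"
      using uniform_weighted_row_bound_transpose[OF J a(1) c] by blast
    with a show "\<exists>a b. 0 < a \<and> a < 1 \<and>
        (\<forall>x\<in>S. (\<forall>i\<in>K. 0 \<le> b x i) \<and> weighted_row_bound (J x) (\<lambda>i j. A x j i) a (b x))"
      by (intro exI[of _ a] exI[of _ b] conjI)
  next
    fix a b assume a: "0 < a" "a < 1"
      and b: "\<forall>x\<in>S. (\<forall>i\<in>K. 0 \<le> b x i) \<and> weighted_row_bound (J x) (\<lambda>i j. A x j i) a (b x)"
    obtain c where "\<forall>x\<in>S. (\<forall>i\<in>K. 0 \<le> c x i) \<and> weighted_row_bound (J x) (A x) a (c x)"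
      using uniform_weighted_row_bound_transpose[OF J' a(1) b] by blast
    with a show "\<exists>a c. 0 < a \<and> a < 1 \<and> (\<forall>x\<in>S. (\<forall>i\<in>K. 0 \<le> c x i) \<and> weighted_row_bound (J x) (A x) a (c x))"
      by (intro exI[of _ a] exI[of _ c] conjI)
  qed
qed

lemma diag_dominance_iff_row_sum:
  fixes A e c :: "'i \<Rightarrow> real"
  assumes "finite J" "i \<in> J" and off: "\<forall>j\<in>J - {i}. A j = - \<bar>e j\<bar>"
  shows "a + (\<Sum>j\<in>J - {i}. c j * \<bar>e j\<bar>) \<le> c i * A i \<longleftrightarrow> a \<le> (\<Sum>j\<in>J. A j * c j)"
proof -
  have "(\<Sum>j\<in>J. A j * c j) = A i * c i + (\<Sum>j\<in>J - {i}. A j * c j)"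
    using assms(1,2) by (rule sum.remove)
  also have "(\<Sum>j\<in>J - {i}. A j * c j) = - (\<Sum>j\<in>J - {i}. c j * \<bar>e j\<bar>)"
    using off by (simp add: sum_negf[symmetric] mult_ac)
  finally have "(\<Sum>j\<in>J. A j * c j) = c i * A i - (\<Sum>j\<in>J - {i}. c j * \<bar>e j\<bar>)"
    by (simp add: mult_ac)
  then show ?thesis by linarith
qed

theorem lemma3p1:
  fixes I :: nat
    and G :: "nat \<Rightarrow> 'a::euclidean_space set"
    and n \<gamma> :: "nat \<Rightarrow> 'a \<Rightarrow> 'a"
  assumes "I \<ge> 1"
    and "is_domain (\<Inter>i\<in>{1..I}. G i)"
    and "\<And>i. i \<in> {1..I} \<Longrightarrow> is_domain (G i)"
    and "\<And>i. i \<in> {1..I} \<Longrightarrow> G i \<noteq> UNIV"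
    and "\<And>i. i \<in> {1..I} \<Longrightarrow> C1_boundary_inward_normal (G i) (n i)"
  shows "(\<exists>a b. 0 < a \<and> a < 1 \<and>
            (\<forall>x\<in>frontier (\<Inter>i\<in>{1..I}. G i).
               (\<forall>i\<in>{1..I}. b x i \<ge> (0::real)) \<and>
               (\<Sum>i\<in>active_idx I G x. b x i) = 1 \<and>
               (\<forall>i\<in>active_idx I G x.
                  b x i * (n i x \<bullet> \<gamma> i x) \<ge>
                  a + (\<Sum>j\<in>active_idx I G x - {i}. b x j * \<bar>n j x \<bullet> \<gamma> i x\<bar>))))
     \<longleftrightarrow>
         (\<exists>a c. 0 < a \<and> a < 1 \<and>
            (\<forall>x\<in>frontier (\<Inter>i\<in>{1..I}. G i).
               (\<forall>i\<in>{1..I}. c x i \<ge> (0::real)) \<and>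
               (\<Sum>i\<in>active_idx I G x. c x i) = 1 \<and>
               (\<forall>i\<in>active_idx I G x.
                  c x i * (\<gamma> i x \<bullet> n i x) \<ge>
                  a + (\<Sum>j\<in>active_idx I G x - {i}. c x j * \<bar>\<gamma> j x \<bullet> n i x\<bar>))))"
  (is "?B \<longleftrightarrow> ?C")
proof -
  let ?F = "frontier (\<Inter>i\<in>{1..I}. G i)" and ?J = "active_idx I G"
  define M where "M x i j = (if i = j then \<gamma> i x \<bullet> n i x else - \<bar>\<gamma> j x \<bullet> n i x\<bar>)" for x i j
  have J: "finite (?J x) \<and> ?J x \<subseteq> {1..I} \<and> Z_matrix_on (?J x) (M x)" for x
    unfolding active_idx_def Z_matrix_on_def M_def by auto
  have b_row: "a + (\<Sum>j\<in>?J x - {i}. b j * \<bar>n j x \<bullet> \<gamma> i x\<bar>) \<le> b i * (n i x \<bullet> \<gamma> i x)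
      \<longleftrightarrow> a \<le> (\<Sum>j\<in>?J x. M x j i * b j)" if "i \<in> ?J x" for x i a b
    using diag_dominance_iff_row_sum[of "?J x" i "\<lambda>j. M x j i" "\<lambda>j. n j x \<bullet> \<gamma> i x" a b] J that
    by (simp add: M_def inner_commute)
  have c_row: "a + (\<Sum>j\<in>?J x - {i}. c j * \<bar>\<gamma> j x \<bullet> n i x\<bar>) \<le> c i * (\<gamma> i x \<bullet> n i x)
      \<longleftrightarrow> a \<le> (\<Sum>j\<in>?J x. M x i j * c j)" if "i \<in> ?J x" for x i a c
    using diag_dominance_iff_row_sum[of "?J x" i "M x i" "\<lambda>j. \<gamma> j x \<bullet> n i x" a c] J that
    by (simp add: M_def)
  have "?B \<longleftrightarrow> (\<exists>a b. 0 < a \<and> a < 1 \<and> (\<forall>x\<in>?F. (\<forall>i\<in>{1..I}. 0 \<le> b x i) \<and>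
      weighted_row_bound (?J x) (\<lambda>i j. M x j i) a (b x)))"
    by (simp add: weighted_row_bound_def b_row)
  also have "\<dots> \<longleftrightarrow> (\<exists>a c. 0 < a \<and> a < 1 \<and> (\<forall>x\<in>?F. (\<forall>i\<in>{1..I}. 0 \<le> c x i) \<and>
      weighted_row_bound (?J x) (M x) a (c x)))"
    by (rule uniform_weighted_row_bound_transpose_iff[symmetric]) (rule J)
  also have "\<dots> \<longleftrightarrow> ?C"
    by (simp add: weighted_row_bound_def c_row)
  finally show ?thesis .
qed

end
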